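(* Let $d\ge1$. For every compact set $\mathbb K\subset\mathbb R^{2d}$ there is a finite constant $C=C(\mathbb K,K,\theta,d)$ such that for all $\varepsilon\in(0,1]$ and all $(x,v)\in\mathbb K$, $$|U^\varepsilon(x,v)|\le C\varepsilon^{-d},\qquad|\nabla_vU^\varepsilon(x,v)|\le C\varepsilon^{-d}.$$
   Context: Let $\theta:\mathbb R^d\to[0,\infty)$ be $C^\infty$ with $\int\theta=1$, $\theta(0)=0$, $\theta(x)=\theta(-x)$, support in the closed unit ball, and $\theta^\varepsilon(x)=\varepsilon^{-d}\theta(x/\varepsilon)$. Let $K>0$ and $\chi^K:\mathbb R^d\to[0,1]$ be $C^\infty$, equal to $1$ on $\{|\xi|\le2K\}$ and $0$ on $\{|\xi|\ge4K\}$. Let $G((x,v),(y,w))=\int_0^\infty\mathsf P_t((x,v),(y,w))dt$ with $\mathsf P_t((x,v),(y,w))=\big(\tfrac{\sqrt3}{2\pi t^2}\big)^d\exp\{-3|\tfrac{v-w}{2t^{1/2}}+\tfrac{x-y-tv}{t^{3/2}}|^2-\tfrac{|v-w|^2}{4t}\}$ (the Green's function of $-(v\cdot\nabla_x+\Delta_v)$), and $U^\varepsilon(x,v)=\iint_{\mathbb R^{2d}}G((x,v),(y,w))\theta^\varepsilon(y)\chi^K(w)dydw$. *)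

theory Defs
  imports "HOL-Analysis.Analysis"
begin

definition partial_deriv :: "'n::finite \<Rightarrow> (real^'n \<Rightarrow> real) \<Rightarrow> real^'n \<Rightarrow> real" where
  "partial_deriv i f x = deriv (\<lambda>t. f (x + t *\<^sub>R axis i 1)) 0"

fun iter_partial :: "'n::finite list \<Rightarrow> (real^'n \<Rightarrow> real) \<Rightarrow> real^'n \<Rightarrow> real" where
  "iter_partial [] f = f"
| "iter_partial (i # is) f = partial_deriv i (iter_partial is f)"

definition smooth_fun :: "(real^'n::finite \<Rightarrow> real) \<Rightarrow> bool" where
  "smooth_fun f \<longleftrightarrow>
     (\<forall>is. continuous_on UNIV (iter_partial is f) \<and>
        (\<forall>i x. (\<lambda>t. iter_partial is f (x + t *\<^sub>R axis i 1)) differentiable (at 0)))"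

(* Transition density P_t((x,v),(y,w)) of the kinetic operator, d = CARD('n) *)
definition kin_P :: "real \<Rightarrow> real^'n::finite \<Rightarrow> real^'n \<Rightarrow> real^'n \<Rightarrow> real^'n \<Rightarrow> real" where
  "kin_P t x v y w =
     (sqrt 3 / (2 * pi * t\<^sup>2)) ^ CARD('n) *
     exp (- 3 * (norm ((1 / (2 * sqrt t)) *\<^sub>R (v - w) + (1 / t powr (3/2)) *\<^sub>R (x - y - t *\<^sub>R v)))\<^sup>2
          - (norm (v - w))\<^sup>2 / (4 * t))"

(* Green's function G((x,v),(y,w)) = int_0^\<infinity> P_t dt  (nonnegative integrand; the
   value is +\<infinity> only on the null set (x,v) = (y,w), where we get 0 via enn2real). *)
definition kin_G :: "real^'n::finite \<Rightarrow> real^'n \<Rightarrow> real^'n \<Rightarrow> real^'n \<Rightarrow> real" where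
  "kin_G x v y w = enn2real (\<integral>\<^sup>+ t. ennreal (kin_P t x v y w) * indicator {0<..} t \<partial>lborel)"

definition mollif :: "(real^'n::finite \<Rightarrow> real) \<Rightarrow> real \<Rightarrow> real^'n \<Rightarrow> real" where
  "mollif theta \<epsilon> y = \<epsilon> powr (- real CARD('n)) * theta ((1 / \<epsilon>) *\<^sub>R y)"

definition U_integrand :: "(real^'n::finite \<Rightarrow> real) \<Rightarrow> (real^'n \<Rightarrow> real) \<Rightarrow> real
     \<Rightarrow> real^'n \<Rightarrow> real^'n \<Rightarrow> (real^'n) \<times> (real^'n) \<Rightarrow> real" where
  "U_integrand theta chi \<epsilon> x v = (\<lambda>(y, w). kin_G x v y w * mollif theta \<epsilon> y * chi w)"

definition U_eps :: "(real^'n::finite \<Rightarrow> real) \<Rightarrow> (real^'n \<Rightarrow> real) \<Rightarrow> real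
     \<Rightarrow> real^'n \<Rightarrow> real^'n \<Rightarrow> real" where
  "U_eps theta chi \<epsilon> x v = (\<integral> yw. U_integrand theta chi \<epsilon> x v yw \<partial>lborel)"

end

theory Submission
  imports Defs "HOL-Probability.Probability"
begin

(* P_t = c t^(-2d) exp(-3|A|^2 - |B|^2), where A and B are the two arguments in the definition
   of kin_P. Since (y, w) -> (A, B) is affine with Jacobian of order t^(-2d), the integral of P_t
   against a source bounded by M and supported in a set S of finite measure is at most
   M min(C, c |S| t^(-2d)); its v-derivative P_t (3 A - B).h / sqrt t obeys the same bound up to a
   factor 1 / sqrt t. Both majorants are integrable in t over (0, infinity). For the source
   theta^eps(y) chi(w) we have M = eps^(-d) sup theta, and Fubini's theorem together with
   differentiation under the integral sign, first in (y, w) and then in t, give both estimates,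
   uniformly in (x, v). *)

section \<open>Gaussian weights\<close>

definition gauss_weight :: "'a::euclidean_space \<Rightarrow> real" where
  "gauss_weight a = (1 + norm a) * exp (- (norm a)\<^sup>2 / 2)"

lemma gauss_weight_nonneg: "gauss_weight a \<ge> 0"
  by (simp add: gauss_weight_def)

lemma gauss_weight_le_2: "gauss_weight a \<le> 2"
proof -
  have "0 \<le> (norm a - 1)\<^sup>2"
    by simp
  then have "2 * norm a \<le> (norm a)\<^sup>2 + 1"
    by (simp add: power2_diff)
  then have "1 + norm a \<le> 2 + (norm a)\<^sup>2"
    using norm_ge_zero[of a] by linarith
  also have "\<dots> \<le> 2 * exp ((norm a)\<^sup>2 / 2)"
    using exp_ge_add_one_self[of "(norm a)\<^sup>2 / 2"] by linarith
  finally show ?thesis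
    by (simp add: gauss_weight_def exp_minus field_simps)
qed

lemma borel_measurable_gauss_weight [measurable]: "gauss_weight \<in> borel_measurable borel"
  unfolding gauss_weight_def by measurable

lemma integrable_gauss_weight_real: "integrable lborel (gauss_weight :: real \<Rightarrow> real)"
proof -
  have "integrable lborel (\<lambda>x. sqrt (2 * pi) *
      (std_normal_density x * \<bar>x\<bar> ^ 0 + std_normal_density x * \<bar>x\<bar> ^ 1))"
    by (intro integrable_mult_right Bochner_Integration.integrable_add integrable_std_normal_moment_abs)
  moreover have "(\<lambda>x. sqrt (2 * pi) * (std_normal_density x * \<bar>x\<bar> ^ 0 + std_normal_density x * \<bar>x\<bar> ^ 1))
      = gauss_weight"
    by (auto simp: std_normal_density_def gauss_weight_def fun_eq_iff field_simps)
  ultimately show ?thesis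
    by metis
qed

lemma one_plus_sum_le_prod:
  fixes f :: "'a \<Rightarrow> real"
  assumes "finite A" "\<And>x. x \<in> A \<Longrightarrow> f x \<ge> 0"
  shows "1 + sum f A \<le> (\<Prod>x\<in>A. 1 + f x)"
  using assms
proof (induction A rule: finite_induct)
  case (insert a A)
  then have "1 + sum f (insert a A) \<le> (1 + f a) * (1 + sum f A)"
    by (simp add: algebra_simps sum_nonneg)
  also have "\<dots> \<le> (1 + f a) * (\<Prod>x\<in>A. 1 + f x)"
    using insert by (intro mult_left_mono) auto
  finally show ?case
    using insert by simp
qed simp

lemma gauss_weight_le_prod_coordinates:
  "gauss_weight a \<le> (\<Prod>b\<in>Basis. gauss_weight (a \<bullet> b))"
proof -
  have "(norm a)\<^sup>2 = (\<Sum>b\<in>Basis. (a \<bullet> b)\<^sup>2)"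
    using power2_norm_eq_inner[of a] euclidean_inner[of a a] by (simp add: power2_eq_square)
  then have exp_prod: "exp (- (norm a)\<^sup>2 / 2) = (\<Prod>b\<in>Basis. exp (- (a \<bullet> b)\<^sup>2 / 2))"
    by (simp add: exp_sum[symmetric] sum_negf sum_divide_distrib)
  have "1 + norm a \<le> 1 + (\<Sum>b\<in>Basis. \<bar>a \<bullet> b\<bar>)"
    using norm_le_l1[of a] by simp
  also have "\<dots> \<le> (\<Prod>b\<in>Basis. 1 + \<bar>a \<bullet> b\<bar>)"
    by (rule one_plus_sum_le_prod) auto
  finally have "(1 + norm a) * exp (- (norm a)\<^sup>2 / 2)
      \<le> (\<Prod>b\<in>Basis. 1 + \<bar>a \<bullet> b\<bar>) * (\<Prod>b\<in>Basis. exp (- (a \<bullet> b)\<^sup>2 / 2))"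
    unfolding exp_prod by (intro mult_right_mono) (auto intro: prod_nonneg)
  then show ?thesis
    by (simp add: gauss_weight_def prod.distrib)
qed

lemma nn_integral_gauss_weight_finite:
  "(\<integral>\<^sup>+a. ennreal (gauss_weight (a::'a::euclidean_space)) \<partial>lborel) < \<infinity>"
proof -
  have "(\<integral>\<^sup>+a. ennreal (gauss_weight (a::'a)) \<partial>lborel)
      \<le> (\<integral>\<^sup>+a. (\<Prod>b\<in>Basis. ennreal (gauss_weight ((a::'a) \<bullet> b))) \<partial>lborel)"
  proof (rule nn_integral_mono)
    fix a :: 'a
    have "ennreal (gauss_weight a) \<le> ennreal (\<Prod>b\<in>Basis. gauss_weight (a \<bullet> b))"
      by (rule ennreal_leI[OF gauss_weight_le_prod_coordinates])
    then show "ennreal (gauss_weight a) \<le> (\<Prod>b\<in>Basis. ennreal (gauss_weight (a \<bullet> b)))"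
      by (simp add: prod_ennreal gauss_weight_nonneg)
  qed
  also have "\<dots> = (\<Prod>b\<in>(Basis::'a set). \<integral>\<^sup>+x. ennreal (gauss_weight (x::real)) \<partial>lborel)"
    by (rule nn_integral_lborel_prod) auto
  also have "\<dots> < \<infinity>"
    using integrable_gauss_weight_real
    by (simp add: integrable_iff_bounded gauss_weight_nonneg power_less_top_ennreal)
  finally show ?thesis .
qed

lemma integrable_gauss_weight: "integrable lborel (gauss_weight :: 'a::euclidean_space \<Rightarrow> real)"
  using nn_integral_gauss_weight_finite by (simp add: integrable_iff_bounded gauss_weight_nonneg)

section \<open>Integration\<close>

lemma nn_integral_lborel_affine:
  fixes f :: "'a::euclidean_space \<Rightarrow> ennreal"
  assumes [measurable]: "f \<in> borel_measurable borel" and "s \<noteq> 0"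
  shows "(\<integral>\<^sup>+y. f (c + s *\<^sub>R y) \<partial>lborel) = ennreal (1 / \<bar>s\<bar> ^ DIM('a)) * (\<integral>\<^sup>+y. f y \<partial>lborel)"
proof -
  have "(\<integral>\<^sup>+y. f y \<partial>lborel) = ennreal (\<bar>s\<bar> ^ DIM('a)) * (\<integral>\<^sup>+y. f (c + s *\<^sub>R y) \<partial>lborel)"
    by (subst lborel_affine[OF \<open>s \<noteq> 0\<close>, of c])
      (simp add: nn_integral_density nn_integral_distr nn_integral_cmult)
  moreover have "ennreal (1 / \<bar>s\<bar> ^ DIM('a)) * ennreal (\<bar>s\<bar> ^ DIM('a)) = 1"
    using \<open>s \<noteq> 0\<close> by (simp add: ennreal_mult'[symmetric])
  ultimately show ?thesis
    by (simp add: mult.assoc[symmetric])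
qed

lemma tendsto_integral_dominated_at:
  fixes s :: "'a::first_countable_topology \<Rightarrow> 'b \<Rightarrow> real"
  assumes [measurable]: "f \<in> borel_measurable M" and "integrable M H"
    and lim: "AE z in M. ((\<lambda>u. s u z) \<longlongrightarrow> f z) (at a)"
    and bound: "\<forall>\<^sub>F u in at a. s u \<in> borel_measurable M \<and> (AE z in M. \<bar>s u z\<bar> \<le> H z)"
  shows "((\<lambda>u. \<integral>z. s u z \<partial>M) \<longlongrightarrow> (\<integral>z. f z \<partial>M)) (at a)"
  unfolding tendsto_at_iff_sequentially comp_def
proof (intro allI impI)
  fix X :: "nat \<Rightarrow> 'a"
  assume "\<forall>i. X i \<in> UNIV - {a}" and "X \<longlonglongrightarrow> a"
  then have "filterlim X (at a) sequentially"
    by (simp add: filterlim_at)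
  from filterlim_iff[THEN iffD1, OF this, rule_format, OF bound]
  obtain N where N: "\<And>n. n \<ge> N \<Longrightarrow> s (X n) \<in> borel_measurable M \<and> (AE z in M. \<bar>s (X n) z\<bar> \<le> H z)"
    by (auto simp: eventually_sequentially)
  show "(\<lambda>n. \<integral>z. s (X n) z \<partial>M) \<longlonglongrightarrow> (\<integral>z. f z \<partial>M)"
  proof (rule LIMSEQ_offset[where k=N], rule integral_dominated_convergence[where w=H])
    show "AE z in M. (\<lambda>n. s (X (n + N)) z) \<longlonglongrightarrow> f z"
      using lim
    proof eventually_elim
      case (elim z)
      then show ?case
        by (intro LIMSEQ_ignore_initial_segment filterlim_compose[OF _ \<open>filterlim X (at a) sequentially\<close>])
    qed
  qed (use N \<open>integrable M H\<close> in auto)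
qed

lemma bounded_linear_integral_dominated:
  fixes L :: "'b \<Rightarrow> 'a::real_normed_vector \<Rightarrow> real"
  assumes lin: "\<And>z. z \<in> space M \<Longrightarrow> linear (L z)"
    and int: "\<And>h. integrable M (\<lambda>z. L z h)"
    and bound: "\<And>z h. z \<in> space M \<Longrightarrow> \<bar>L z h\<bar> \<le> H z * norm h"
    and "integrable M H"
  shows "bounded_linear (\<lambda>h. \<integral>z. L z h \<partial>M)"
proof (rule bounded_linear_intro[where K="\<integral>z. H z \<partial>M"])
  fix a b :: 'a and r :: real
  have "(\<integral>z. L z (a + b) \<partial>M) = (\<integral>z. L z a + L z b \<partial>M)"
    using lin by (intro Bochner_Integration.integral_cong) (simp_all add: linear_add)
  then show "(\<integral>z. L z (a + b) \<partial>M) = (\<integral>z. L z a \<partial>M) + (\<integral>z. L z b \<partial>M)"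
    using int by simp
  have "(\<integral>z. L z (r *\<^sub>R a) \<partial>M) = (\<integral>z. r * L z a \<partial>M)"
    using lin by (intro Bochner_Integration.integral_cong) (simp_all add: linear_scale)
  then show "(\<integral>z. L z (r *\<^sub>R a) \<partial>M) = r *\<^sub>R (\<integral>z. L z a \<partial>M)"
    by simp
  have "norm (\<integral>z. L z a \<partial>M) \<le> (\<integral>z. norm (L z a) \<partial>M)"
    by (rule integral_norm_bound)
  also have "\<dots> \<le> (\<integral>z. H z * norm a \<partial>M)"
    using bound int \<open>integrable M H\<close> by (intro Bochner_Integration.integral_mono) auto
  finally show "norm (\<integral>z. L z a \<partial>M) \<le> norm a * (\<integral>z. H z \<partial>M)"
    by (simp add: mult.commute)
qed

lemma integrable_dominated:
  fixes f :: "'b \<Rightarrow> real"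
  assumes "f \<in> borel_measurable M" "integrable M H" "\<And>z. z \<in> space M \<Longrightarrow> \<bar>f z\<bar> \<le> H z"
  shows "integrable M f"
proof (rule Bochner_Integration.integrable_bound[OF assms(2,1)])
  show "AE z in M. norm (f z) \<le> norm (H z)"
  proof (rule AE_I2)
    fix z assume "z \<in> space M"
    then have "\<bar>f z\<bar> \<le> H z"
      by (rule assms(3))
    then show "norm (f z) \<le> norm (H z)"
      by simp
  qed
qed

lemma abs_diff_le_of_derivative_bound:
  fixes f :: "'a::{real_normed_vector, perfect_space} \<Rightarrow> real"
  assumes deriv: "\<And>u. u \<in> ball v \<delta> \<Longrightarrow> (f has_derivative f' u) (at u)"
    and bound: "\<And>u h. u \<in> ball v \<delta> \<Longrightarrow> \<bar>f' u h\<bar> \<le> B * norm h"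
    and "u \<in> ball v \<delta>"
  shows "\<bar>f u - f v\<bar> \<le> B * norm (u - v)"
proof -
  have "norm (f u - f v) \<le> B * norm (u - v)"
  proof (rule differentiable_bound[where S="ball v \<delta>"])
    show "(f has_derivative f' w) (at w within ball v \<delta>)" if "w \<in> ball v \<delta>" for w
      using deriv[OF that] by (rule has_derivative_at_withinI)
    show "onorm (f' w) \<le> B" if "w \<in> ball v \<delta>" for w
      by (rule onorm_le) (use bound[OF that] in simp)
  qed (use \<open>u \<in> ball v \<delta>\<close> in \<open>auto intro: le_less_trans[OF zero_le_dist]\<close>)
  then show ?thesis
    by simp
qed

context
  fixes \<phi> :: "'a::euclidean_space \<Rightarrow> 'm \<Rightarrow> real" and \<phi>' :: "'a \<Rightarrow> 'm \<Rightarrow> 'a \<Rightarrow> real"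
    and M :: "'m measure" and H :: "'m \<Rightarrow> real" and v :: 'a and \<delta> :: real
  assumes "\<delta> > 0"
    and deriv: "\<And>u z. u \<in> ball v \<delta> \<Longrightarrow> z \<in> space M \<Longrightarrow> ((\<lambda>u. \<phi> u z) has_derivative \<phi>' u z) (at u)"
    and int: "\<And>u. u \<in> ball v \<delta> \<Longrightarrow> integrable M (\<phi> u)"
    and [measurable]: "\<And>h. (\<lambda>z. \<phi>' v z h) \<in> borel_measurable M"
    and bound: "\<And>u z h. u \<in> ball v \<delta> \<Longrightarrow> z \<in> space M \<Longrightarrow> \<bar>\<phi>' u z h\<bar> \<le> H z * norm h"
    and "integrable M H"
begin

lemma integrable_derivative_dominated: "integrable M (\<lambda>z. \<phi>' v z h)"
proof (rule integrable_dominated[where H="\<lambda>z. H z * norm h"])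
  show "integrable M (\<lambda>z. H z * norm h)"
    using \<open>integrable M H\<close> by simp
  show "\<bar>\<phi>' v z h\<bar> \<le> H z * norm h" if "z \<in> space M" for z
    using bound[OF _ that] \<open>\<delta> > 0\<close> by simp
qed measurable

lemma tendsto_integral_difference_quotient:
  "((\<lambda>h. ((\<integral>z. \<phi> (v + h) z \<partial>M) - (\<integral>z. \<phi> v z \<partial>M) - (\<integral>z. \<phi>' v z h \<partial>M)) / norm h) \<longlongrightarrow> 0) (at 0)"
proof -
  have v: "v \<in> ball v \<delta>"
    using \<open>\<delta> > 0\<close> by simp
  define R where "R h z = (\<phi> (v + h) z - \<phi> v z - \<phi>' v z h) / norm h" for h z
  have "((\<lambda>h. \<integral>z. R h z \<partial>M) \<longlongrightarrow> (\<integral>z. 0 \<partial>M)) (at 0)"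
  proof (rule tendsto_integral_dominated_at[where H="\<lambda>z. 2 * H z"])
    show "AE z in M. ((\<lambda>h. R h z) \<longlongrightarrow> 0) (at 0)"
    proof (rule AE_I2)
      fix z assume "z \<in> space M"
      then have "((\<lambda>h. \<bar>R h z\<bar>) \<longlongrightarrow> 0) (at 0)"
        using deriv[OF v] unfolding has_derivative_at by (simp add: R_def)
      then show "((\<lambda>h. R h z) \<longlongrightarrow> 0) (at 0)"
        by (simp only: tendsto_rabs_zero_iff)
    qed
    have "\<forall>\<^sub>F h in at 0. v + h \<in> ball v \<delta> \<and> h \<noteq> 0"
      using eventually_at_ball'[OF \<open>\<delta> > 0\<close>, of 0 UNIV] by eventually_elim (auto simp: dist_norm)
    then show "\<forall>\<^sub>F h in at 0. R h \<in> borel_measurable M \<and> (AE z in M. \<bar>R h z\<bar> \<le> 2 * H z)"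
    proof eventually_elim
      case (elim h)
      have [measurable]: "\<phi> (v + h) \<in> borel_measurable M" "\<phi> v \<in> borel_measurable M"
        using elim int[of "v + h"] int[OF v] by (auto intro: borel_measurable_integrable)
      have "\<bar>\<phi> (v + h) z - \<phi> v z - \<phi>' v z h\<bar> \<le> (2 * H z) * norm h" if "z \<in> space M" for z
      proof -
        have "\<bar>\<phi> (v + h) z - \<phi> v z\<bar> \<le> H z * norm (v + h - v)"
          by (rule abs_diff_le_of_derivative_bound[where f="\<lambda>u. \<phi> u z" and f'="\<lambda>u. \<phi>' u z"])
            (use deriv[OF _ that] bound[OF _ that] elim in auto)
        then show ?thesis
          using bound[OF v that, of h] by simp
      qed
      then have "AE z in M. \<bar>R h z\<bar> \<le> 2 * H z"
        using elim by (auto simp: R_def divide_le_eq)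
      moreover have "R h \<in> borel_measurable M"
        unfolding R_def by measurable
      ultimately show ?case
        by simp
    qed
  qed (use \<open>integrable M H\<close> in simp_all)
  moreover have "\<forall>\<^sub>F h in at 0. (\<integral>z. R h z \<partial>M)
      = ((\<integral>z. \<phi> (v + h) z \<partial>M) - (\<integral>z. \<phi> v z \<partial>M) - (\<integral>z. \<phi>' v z h \<partial>M)) / norm h"
    using eventually_at_ball[OF \<open>\<delta> > 0\<close>, of 0 UNIV]
    by eventually_elim (use int int[OF v] integrable_derivative_dominated in \<open>simp add: R_def dist_norm\<close>)
  ultimately show ?thesis
    by (simp add: tendsto_cong)
qed

lemma has_derivative_integral_dominated:
  "((\<lambda>u. \<integral>z. \<phi> u z \<partial>M) has_derivative (\<lambda>h. \<integral>z. \<phi>' v z h \<partial>M)) (at v)"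
proof -
  have v: "v \<in> ball v \<delta>"
    using \<open>\<delta> > 0\<close> by simp
  have "bounded_linear (\<lambda>h. \<integral>z. \<phi>' v z h \<partial>M)"
    using deriv[OF v] bound[OF v] integrable_derivative_dominated \<open>integrable M H\<close>
    by (intro bounded_linear_integral_dominated[where H=H]) (auto dest: has_derivative_linear)
  moreover note tendsto_rabs_zero[OF tendsto_integral_difference_quotient]
  ultimately show ?thesis
    unfolding has_derivative_at by simp
qed

end

lemma abs_integral_le_of_nn_integral_le:
  fixes f :: "'a \<Rightarrow> real"
  assumes "integrable M f" "(\<integral>\<^sup>+z. ennreal \<bar>f z\<bar> \<partial>M) \<le> ennreal B" "B \<ge> 0"
  shows "\<bar>\<integral>z. f z \<partial>M\<bar> \<le> B"
proof -
  have "ennreal \<bar>\<integral>z. f z \<partial>M\<bar> \<le> (\<integral>\<^sup>+z. ennreal \<bar>f z\<bar> \<partial>M)"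
    using integral_norm_bound_ennreal[OF assms(1)] by simp
  also have "\<dots> \<le> ennreal B"
    by (rule assms(2))
  finally show ?thesis
    using assms(3) by (simp add: ennreal_le_iff)
qed

lemma integrable_lborel_of_has_integral:
  fixes f :: "real \<Rightarrow> real"
  assumes [measurable]: "f \<in> borel_measurable borel" and "\<And>x. f x \<ge> 0" and "(f has_integral I) UNIV"
  shows "integrable lborel f"
proof (rule integrableI_bounded)
  have "(\<integral>\<^sup>+x. ennreal (norm (f x)) \<partial>lborel) = ennreal I"
    using assms by (simp add: nn_integral_has_integral_lborel)
  then show "(\<integral>\<^sup>+x. ennreal (norm (f x)) \<partial>lborel) < \<infinity>"
    by simp
qed simp

lemma borel_measurable_lborel_pair:
  fixes f :: "real \<times> ('a::euclidean_space \<times> 'b::euclidean_space) \<Rightarrow> real"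
  assumes "f \<in> borel_measurable (borel \<Otimes>\<^sub>M (borel \<Otimes>\<^sub>M borel))"
  shows "f \<in> borel_measurable (lborel \<Otimes>\<^sub>M lborel)"
proof -
  have "sets (lborel \<Otimes>\<^sub>M (lborel :: ('a \<times> 'b) measure)) = sets (borel \<Otimes>\<^sub>M (borel \<Otimes>\<^sub>M borel))"
    by (rule sets_pair_measure_cong) (simp_all only: sets_lborel borel_prod)
  from measurable_cong_sets[OF this refl] show ?thesis
    using assms by blast
qed

lemma bounded_vanishing_outside_cball:
  fixes f :: "'a::{real_normed_vector, heine_borel} \<Rightarrow> real"
  assumes "continuous_on UNIV f" "\<And>x. norm x > r \<Longrightarrow> f x = 0"
  obtains B where "\<And>x. \<bar>f x\<bar> \<le> B"
proof -
  have "compact (f ` cball 0 r)"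
    using assms(1) by (intro compact_continuous_image) (auto intro: continuous_on_subset)
  then obtain B where B: "\<And>x. x \<in> cball 0 r \<Longrightarrow> \<bar>f x\<bar> \<le> B"
    by (metis compact_imp_bounded bounded_iff image_eqI real_norm_def)
  have "\<bar>f x\<bar> \<le> max B 0" for x
    using B[of x] assms(2)[of x] by (cases "norm x > r") auto
  then show ?thesis
    using that[of "max B 0"] by simp
qed

section \<open>The kinetic transition density\<close>

definition kin_A :: "real \<Rightarrow> real^'n::finite \<Rightarrow> real^'n \<Rightarrow> real^'n \<Rightarrow> real^'n \<Rightarrow> real^'n" where
  "kin_A t x v y w = (1 / (2 * sqrt t)) *\<^sub>R (v - w) + (1 / t powr (3/2)) *\<^sub>R (x - y - t *\<^sub>R v)"

definition kin_B :: "real \<Rightarrow> real^'n::finite \<Rightarrow> real^'n \<Rightarrow> real^'n" where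
  "kin_B t v w = (1 / (2 * sqrt t)) *\<^sub>R (v - w)"

lemma borel_measurable_kin_A [measurable]: "(\<lambda>p. kin_A t x v (fst p) (snd p)) \<in> borel_measurable borel"
  unfolding kin_A_def by (intro borel_measurable_continuous_onI continuous_intros)

lemma borel_measurable_kin_B [measurable]: "(\<lambda>p. kin_B t v (snd p)) \<in> borel_measurable borel"
  unfolding kin_B_def by (intro borel_measurable_continuous_onI continuous_intros)

definition kin_const :: "nat \<Rightarrow> real" where
  "kin_const d = (sqrt 3 / (2 * pi)) ^ d"

lemma kin_const_pos: "kin_const d > 0"
  by (simp add: kin_const_def)

lemma kin_P_eq_exp:
  fixes x v y w :: "real^'n::finite"
  assumes "t > 0"
  shows "kin_P t x v y w = kin_const CARD('n) / t ^ (2 * CARD('n)) *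
    exp (- 3 * (norm (kin_A t x v y w))\<^sup>2 - (norm (kin_B t v w))\<^sup>2)"
proof -
  have "(norm (kin_B t v w))\<^sup>2 = (norm (v - w))\<^sup>2 / (4 * t)"
    using \<open>t > 0\<close> by (simp add: kin_B_def power_mult_distrib power_divide power2_eq_square[of 2])
  moreover have "(sqrt 3 / (2 * pi * t\<^sup>2)) ^ CARD('n) = kin_const CARD('n) / t ^ (2 * CARD('n))"
    by (simp add: kin_const_def power_divide power_mult_distrib power_mult)
  ultimately show ?thesis
    by (simp add: kin_P_def kin_A_def)
qed

lemma kin_P_nonneg: "kin_P t x v y w \<ge> 0"
  by (simp add: kin_P_def)

lemma borel_measurable_kin_P [measurable]: "(\<lambda>p. kin_P t x v (fst p) (snd p)) \<in> borel_measurable borel"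
proof -
  have "(\<lambda>p. kin_P t x v (fst p) (snd p)) \<in> borel_measurable (borel \<Otimes>\<^sub>M borel)"
    unfolding kin_P_def by measurable
  then show ?thesis
    by (simp add: borel_prod)
qed

lemma integral_kin_P_eq_kin_G:
  "(\<integral>t. indicator {0<..} t * kin_P t x v y w \<partial>lborel) = kin_G x v y w"
proof -
  have "(\<integral>t. indicator {0<..} t * kin_P t x v y w \<partial>lborel)
      = enn2real (\<integral>\<^sup>+t. ennreal (indicator {0<..} t * kin_P t x v y w) \<partial>lborel)"
    by (rule integral_eq_nn_integral) (auto simp: kin_P_nonneg kin_P_def)
  also have "(\<integral>\<^sup>+t. ennreal (indicator {0<..} t * kin_P t x v y w) \<partial>lborel)
      = (\<integral>\<^sup>+t. ennreal (kin_P t x v y w) * indicator {0<..} t \<partial>lborel)"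
    by (intro nn_integral_cong) (auto split: split_indicator)
  finally show ?thesis
    unfolding kin_G_def .
qed

(* The weight (1 + |A|)(1 + |B|) dominates the factor (3 A - B).h of the v-derivative of P_t. *)
definition kin_P_weighted :: "real \<Rightarrow> real^'n::finite \<Rightarrow> real^'n \<Rightarrow> real^'n \<Rightarrow> real^'n \<Rightarrow> real" where
  "kin_P_weighted t x v y w =
     kin_P t x v y w * ((1 + norm (kin_A t x v y w)) * (1 + norm (kin_B t v w)))"

lemma kin_P_le_weighted: "kin_P t x v y w \<le> kin_P_weighted t x v y w"
proof -
  have "1 \<le> (1 + norm (kin_A t x v y w)) * (1 + norm (kin_B t v w))"
    using mult_mono[of 1 "1 + norm (kin_A t x v y w)" 1 "1 + norm (kin_B t v w)"] by simp
  then show ?thesis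
    unfolding kin_P_weighted_def using kin_P_nonneg mult_left_mono by fastforce
qed

lemma kin_P_weighted_nonneg: "kin_P_weighted t x v y w \<ge> 0"
  using kin_P_le_weighted kin_P_nonneg order_trans by blast

lemma borel_measurable_kin_P_weighted [measurable]:
  "(\<lambda>p. kin_P_weighted t x v (fst p) (snd p)) \<in> borel_measurable borel"
proof -
  have "(\<lambda>p. kin_P_weighted t x v (fst p) (snd p)) \<in> borel_measurable (borel \<Otimes>\<^sub>M borel)"
    unfolding kin_P_weighted_def kin_P_def kin_A_def kin_B_def by measurable
  then show ?thesis
    by (simp add: borel_prod)
qed

lemma exp_mult_le_gauss_weight:
  fixes a b :: "'a::euclidean_space"
  shows "exp (- 3 * (norm a)\<^sup>2 - (norm b)\<^sup>2) * ((1 + norm a) * (1 + norm b))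
    \<le> gauss_weight a * gauss_weight b"
proof -
  have "exp (- 3 * (norm a)\<^sup>2 - (norm b)\<^sup>2) \<le> exp (- (norm a)\<^sup>2 / 2) * exp (- (norm b)\<^sup>2 / 2)"
    unfolding exp_add[symmetric] exp_le_cancel_iff
    using zero_le_power2[of "norm a"] zero_le_power2[of "norm b"] by linarith
  then have "exp (- 3 * (norm a)\<^sup>2 - (norm b)\<^sup>2) * ((1 + norm a) * (1 + norm b))
      \<le> exp (- (norm a)\<^sup>2 / 2) * exp (- (norm b)\<^sup>2 / 2) * ((1 + norm a) * (1 + norm b))"
    by (intro mult_right_mono) auto
  then show ?thesis
    by (simp add: gauss_weight_def algebra_simps)
qed

lemma kin_P_weighted_le_gauss_weight:
  fixes x v y w :: "real^'n::finite"
  assumes "t > 0"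
  shows "kin_P_weighted t x v y w
    \<le> kin_const CARD('n) / t ^ (2 * CARD('n)) * (gauss_weight (kin_A t x v y w) * gauss_weight (kin_B t v w))"
  unfolding kin_P_weighted_def kin_P_eq_exp[OF \<open>t > 0\<close>] mult.assoc
  using \<open>t > 0\<close> kin_const_pos[of "CARD('n)"]
  by (intro mult_left_mono exp_mult_le_gauss_weight) auto

lemma kin_P_weighted_le:
  fixes x v y w :: "real^'n::finite"
  assumes "t > 0"
  shows "kin_P_weighted t x v y w \<le> 4 * kin_const CARD('n) / t ^ (2 * CARD('n))"
proof -
  have "gauss_weight (kin_A t x v y w) * gauss_weight (kin_B t v w) \<le> 2 * 2"
    by (intro mult_mono gauss_weight_le_2 gauss_weight_nonneg) auto
  then have "kin_const CARD('n) / t ^ (2 * CARD('n)) * (gauss_weight (kin_A t x v y w) * gauss_weight (kin_B t v w))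
      \<le> kin_const CARD('n) / t ^ (2 * CARD('n)) * 4"
    using \<open>t > 0\<close> kin_const_pos[of "CARD('n)"] by (intro mult_left_mono) auto
  from order_trans[OF kin_P_weighted_le_gauss_weight[OF \<open>t > 0\<close>] this] show ?thesis
    by (simp add: mult.commute)
qed

lemma powr_three_halves:
  assumes "t > 0"
  shows "t powr (3/2) = t * sqrt t"
proof -
  have "t powr (3/2) = t powr (1 + 1/2)"
    by simp
  also have "\<dots> = t powr 1 * t powr (1/2)"
    by (rule powr_add)
  also have "\<dots> = t * sqrt t"
    using assms by (simp add: powr_half_sqrt)
  finally show ?thesis .
qed

lemma nn_integral_gauss_weight_kin_A:
  fixes x v w :: "real^'n::finite"
  assumes "t > 0"
  shows "(\<integral>\<^sup>+y. ennreal (gauss_weight (kin_A t x v y w)) \<partial>lborel)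
    = ennreal ((t powr (3/2)) ^ CARD('n)) * (\<integral>\<^sup>+a. ennreal (gauss_weight (a::real^'n)) \<partial>lborel)"
proof -
  define a0 where "a0 = kin_A t x v 0 w"
  have "kin_A t x v y w = a0 + (- (1 / t powr (3/2))) *\<^sub>R y" for y
    by (simp add: a0_def kin_A_def algebra_simps)
  then have "(\<integral>\<^sup>+y. ennreal (gauss_weight (kin_A t x v y w)) \<partial>lborel)
      = (\<integral>\<^sup>+y. ennreal (gauss_weight (a0 + (- (1 / t powr (3/2))) *\<^sub>R y)) \<partial>lborel)"
    by (simp only:)
  also have "\<dots> = ennreal (1 / \<bar>- (1 / t powr (3/2))\<bar> ^ DIM(real^'n)) * (\<integral>\<^sup>+a. ennreal (gauss_weight (a::real^'n)) \<partial>lborel)"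
    by (subst nn_integral_lborel_affine[where f="\<lambda>a. ennreal (gauss_weight a)"]) (use \<open>t > 0\<close> in auto)
  also have "1 / \<bar>- (1 / t powr (3/2))\<bar> ^ DIM(real^'n) = (t powr (3/2)) ^ CARD('n)"
    using \<open>t > 0\<close> by (simp add: power_one_over)
  finally show ?thesis .
qed

lemma nn_integral_gauss_weight_kin_B:
  fixes v :: "real^'n::finite"
  assumes "t > 0"
  shows "(\<integral>\<^sup>+w. ennreal (gauss_weight (kin_B t v w)) \<partial>lborel)
    = ennreal ((2 * sqrt t) ^ CARD('n)) * (\<integral>\<^sup>+a. ennreal (gauss_weight (a::real^'n)) \<partial>lborel)"
proof -
  define b0 where "b0 = kin_B t v 0"
  have "kin_B t v w = b0 + (- (1 / (2 * sqrt t))) *\<^sub>R w" for w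
    by (simp add: b0_def kin_B_def algebra_simps)
  then have "(\<integral>\<^sup>+w. ennreal (gauss_weight (kin_B t v w)) \<partial>lborel)
      = (\<integral>\<^sup>+w. ennreal (gauss_weight (b0 + (- (1 / (2 * sqrt t))) *\<^sub>R w)) \<partial>lborel)"
    by (simp only:)
  also have "\<dots> = ennreal (1 / \<bar>- (1 / (2 * sqrt t))\<bar> ^ DIM(real^'n)) * (\<integral>\<^sup>+a. ennreal (gauss_weight (a::real^'n)) \<partial>lborel)"
    by (subst nn_integral_lborel_affine[where f="\<lambda>a. ennreal (gauss_weight a)"]) (use \<open>t > 0\<close> in auto)
  also have "1 / \<bar>- (1 / (2 * sqrt t))\<bar> ^ DIM(real^'n) = (2 * sqrt t) ^ CARD('n)"
    using \<open>t > 0\<close> by (simp add: power_one_over)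
  finally show ?thesis .
qed

lemma nn_integral_gauss_weight_kin_A_kin_B:
  fixes x v :: "real^'n::finite"
  assumes "t > 0"
  shows "(\<integral>\<^sup>+p. ennreal (gauss_weight (kin_A t x v (fst p) (snd p)) * gauss_weight (kin_B t v (snd p))) \<partial>lborel)
    = ennreal (2 ^ CARD('n) * t ^ (2 * CARD('n))) * (\<integral>\<^sup>+a. ennreal (gauss_weight (a::real^'n)) \<partial>lborel)\<^sup>2"
proof -
  let ?I = "\<integral>\<^sup>+a. ennreal (gauss_weight (a::real^'n)) \<partial>lborel"
  have "2 * sqrt t * t powr (3/2) = 2 * t\<^sup>2"
    using \<open>t > 0\<close> by (simp add: powr_three_halves power2_eq_square)
  then have "(2 * sqrt t) ^ CARD('n) * (t powr (3/2)) ^ CARD('n) = (2 * t\<^sup>2) ^ CARD('n)"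
    by (metis power_mult_distrib)
  also have "\<dots> = 2 ^ CARD('n) * t ^ (2 * CARD('n))"
    by (simp add: power_mult_distrib power_mult)
  finally have jacobian: "(2 * sqrt t) ^ CARD('n) * (t powr (3/2)) ^ CARD('n) = 2 ^ CARD('n) * t ^ (2 * CARD('n))" .
  have "(\<integral>\<^sup>+p. ennreal (gauss_weight (kin_A t x v (fst p) (snd p)) * gauss_weight (kin_B t v (snd p))) \<partial>lborel)
      = (\<integral>\<^sup>+p. ennreal (gauss_weight (kin_A t x v (fst p) (snd p)) * gauss_weight (kin_B t v (snd p)))
          \<partial>(lborel \<Otimes>\<^sub>M lborel))"
    by (simp only: lborel_prod)
  also have "\<dots> = (\<integral>\<^sup>+w. \<integral>\<^sup>+y. ennreal (gauss_weight (kin_B t v w)) * ennreal (gauss_weight (kin_A t x v y w))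
      \<partial>lborel \<partial>lborel)"
    by (subst lborel_pair.nn_integral_snd[symmetric])
      (auto simp: kin_A_def kin_B_def ennreal_mult' gauss_weight_nonneg mult.commute)
  also have "\<dots> = (\<integral>\<^sup>+w. ennreal (gauss_weight (kin_B t v w)) * (ennreal ((t powr (3/2)) ^ CARD('n)) * ?I) \<partial>lborel)"
  proof (rule nn_integral_cong)
    fix w
    have "(\<integral>\<^sup>+y. ennreal (gauss_weight (kin_B t v w)) * ennreal (gauss_weight (kin_A t x v y w)) \<partial>lborel)
        = ennreal (gauss_weight (kin_B t v w)) * (\<integral>\<^sup>+y. ennreal (gauss_weight (kin_A t x v y w)) \<partial>lborel)"
      by (rule nn_integral_cmult) (unfold kin_A_def, measurable)
    then show "(\<integral>\<^sup>+y. ennreal (gauss_weight (kin_B t v w)) * ennreal (gauss_weight (kin_A t x v y w)) \<partial>lborel)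
        = ennreal (gauss_weight (kin_B t v w)) * (ennreal ((t powr (3/2)) ^ CARD('n)) * ?I)"
      by (simp only: nn_integral_gauss_weight_kin_A[OF \<open>t > 0\<close>])
  qed
  also have "\<dots> = (\<integral>\<^sup>+w. ennreal (gauss_weight (kin_B t v w)) \<partial>lborel) * (ennreal ((t powr (3/2)) ^ CARD('n)) * ?I)"
    by (rule nn_integral_multc) (unfold kin_B_def, measurable)
  also have "\<dots> = ennreal ((2 * sqrt t) ^ CARD('n)) * ennreal ((t powr (3/2)) ^ CARD('n)) * ?I\<^sup>2"
    unfolding nn_integral_gauss_weight_kin_B[OF \<open>t > 0\<close>] by (simp add: power2_eq_square mult_ac)
  also have "ennreal ((2 * sqrt t) ^ CARD('n)) * ennreal ((t powr (3/2)) ^ CARD('n))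
      = ennreal ((2 * sqrt t) ^ CARD('n) * (t powr (3/2)) ^ CARD('n))"
    using \<open>t > 0\<close> by (intro ennreal_mult'[symmetric]) simp
  finally show ?thesis
    unfolding jacobian .
qed

definition kin_weight_bound :: "'n::finite itself \<Rightarrow> real" where
  "kin_weight_bound _ = kin_const CARD('n) * 2 ^ CARD('n) * (\<integral>a. gauss_weight (a::real^'n) \<partial>lborel)\<^sup>2"

lemma kin_weight_bound_nonneg: "kin_weight_bound TYPE('n::finite) \<ge> 0"
  unfolding kin_weight_bound_def using kin_const_pos[of "CARD('n)"] by simp

lemma nn_integral_kin_P_weighted_le:
  fixes x v :: "real^'n::finite"
  assumes "t > 0"
  shows "(\<integral>\<^sup>+p. ennreal (kin_P_weighted t x v (fst p) (snd p)) \<partial>lborel) \<le> ennreal (kin_weight_bound TYPE('n))"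
proof -
  let ?c = "kin_const CARD('n) / t ^ (2 * CARD('n))"
  let ?I = "\<integral>a. gauss_weight (a::real^'n) \<partial>lborel"
  have c: "?c \<ge> 0"
    using kin_const_pos[of "CARD('n)"] \<open>t > 0\<close> by simp
  have I0: "?I \<ge> 0"
    by (simp add: gauss_weight_nonneg)
  have I: "(\<integral>\<^sup>+a. ennreal (gauss_weight (a::real^'n)) \<partial>lborel) = ennreal ?I"
    by (rule nn_integral_eq_integral[OF integrable_gauss_weight]) (simp add: gauss_weight_nonneg)
  have "(\<integral>\<^sup>+p. ennreal (kin_P_weighted t x v (fst p) (snd p)) \<partial>lborel)
      \<le> (\<integral>\<^sup>+p. ennreal ?c * ennreal (gauss_weight (kin_A t x v (fst p) (snd p)) * gauss_weight (kin_B t v (snd p))) \<partial>lborel)"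
    using kin_P_weighted_le_gauss_weight[OF \<open>t > 0\<close>, of x v] c
    by (intro nn_integral_mono) (auto simp: ennreal_mult'[symmetric] intro!: ennreal_leI)
  also have "\<dots> = ennreal ?c * (\<integral>\<^sup>+p. ennreal (gauss_weight (kin_A t x v (fst p) (snd p)) * gauss_weight (kin_B t v (snd p))) \<partial>lborel)"
    by (rule nn_integral_cmult) measurable
  also have "\<dots> = ennreal ?c * (ennreal (2 ^ CARD('n) * t ^ (2 * CARD('n))) * ennreal (?I\<^sup>2))"
    using \<open>t > 0\<close> I0 by (simp add: nn_integral_gauss_weight_kin_A_kin_B I ennreal_power)
  also have "\<dots> = ennreal (?c * (2 ^ CARD('n) * t ^ (2 * CARD('n)) * ?I\<^sup>2))"
    using c \<open>t > 0\<close> by (simp flip: ennreal_mult')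
  also have "?c * (2 ^ CARD('n) * t ^ (2 * CARD('n)) * ?I\<^sup>2) = kin_weight_bound TYPE('n)"
    using \<open>t > 0\<close> by (simp add: kin_weight_bound_def)
  finally show ?thesis .
qed

definition kin_dP :: "real \<Rightarrow> real^'n::finite \<Rightarrow> real^'n \<Rightarrow> real^'n \<Rightarrow> real^'n \<Rightarrow> real^'n \<Rightarrow> real" where
  "kin_dP t x v y w h = kin_P t x v y w * ((3 * (kin_A t x v y w \<bullet> h) - kin_B t v w \<bullet> h) / sqrt t)"

lemma borel_measurable_kin_dP [measurable]: "(\<lambda>p. kin_dP t x v (fst p) (snd p) h) \<in> borel_measurable borel"
proof -
  have "(\<lambda>p. kin_dP t x v (fst p) (snd p) h) \<in> borel_measurable (borel \<Otimes>\<^sub>M borel)"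
    unfolding kin_dP_def kin_P_def kin_A_def kin_B_def by measurable
  then show ?thesis
    by (simp add: borel_prod)
qed

lemma has_derivative_kin_P:
  fixes x v y w :: "real^'n::finite"
  assumes "t > 0"
  shows "((\<lambda>v. kin_P t x v y w) has_derivative kin_dP t x v y w) (at v)"
proof -
  let ?a = "1 / (2 * sqrt t)"
  let ?c = "kin_const CARD('n) / t ^ (2 * CARD('n))"
  have a_eq: "?a - t / t powr (3/2) = - ?a"
    using \<open>t > 0\<close> by (simp add: powr_three_halves field_simps)
  have "((\<lambda>v. kin_A t x v y w) has_derivative (\<lambda>h. (?a - t / t powr (3/2)) *\<^sub>R h)) (at v)"
    unfolding kin_A_def by (auto intro!: derivative_eq_intros simp: fun_eq_iff algebra_simps)
  then have dA: "((\<lambda>v. kin_A t x v y w) has_derivative (\<lambda>h. (- ?a) *\<^sub>R h)) (at v)"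
    by (simp only: a_eq)
  have dB: "((\<lambda>v. kin_B t v w) has_derivative (\<lambda>h. ?a *\<^sub>R h)) (at v)"
    unfolding kin_B_def by (auto intro!: derivative_eq_intros)
  have "((\<lambda>v. ?c * exp (- 3 * (kin_A t x v y w \<bullet> kin_A t x v y w) - kin_B t v w \<bullet> kin_B t v w)) has_derivative
     (\<lambda>h. ?c * exp (- 3 * (kin_A t x v y w \<bullet> kin_A t x v y w) - kin_B t v w \<bullet> kin_B t v w) *
        ((3 * (kin_A t x v y w \<bullet> h) - kin_B t v w \<bullet> h) / sqrt t))) (at v)"
    using \<open>t > 0\<close>
    by (auto intro!: derivative_eq_intros dA dB simp: fun_eq_iff inner_commute field_simps)
  moreover have "(\<lambda>v. kin_P t x v y w)
      = (\<lambda>v. ?c * exp (- 3 * (kin_A t x v y w \<bullet> kin_A t x v y w) - kin_B t v w \<bullet> kin_B t v w))"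
    using \<open>t > 0\<close> by (simp add: fun_eq_iff kin_P_eq_exp power2_norm_eq_inner)
  ultimately show ?thesis
    unfolding kin_dP_def using \<open>t > 0\<close> by (simp add: kin_P_eq_exp power2_norm_eq_inner)
qed

lemma abs_kin_dP_le:
  fixes x v y w :: "real^'n::finite"
  assumes "t > 0"
  shows "\<bar>kin_dP t x v y w h\<bar> \<le> 3 / sqrt t * kin_P_weighted t x v y w * norm h"
proof -
  let ?A = "kin_A t x v y w" and ?B = "kin_B t v w"
  have "\<bar>3 * (?A \<bullet> h) - ?B \<bullet> h\<bar> \<le> 3 * (norm ?A * norm h) + norm ?B * norm h"
    using Cauchy_Schwarz_ineq2[of ?A h] Cauchy_Schwarz_ineq2[of ?B h] by linarith
  also have "\<dots> \<le> 3 * ((1 + norm ?A) * (1 + norm ?B)) * norm h"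
    by (simp add: algebra_simps mult_right_mono)
  finally have "kin_P t x v y w * \<bar>3 * (?A \<bullet> h) - ?B \<bullet> h\<bar> / sqrt t
      \<le> kin_P t x v y w * (3 * ((1 + norm ?A) * (1 + norm ?B)) * norm h) / sqrt t"
    using kin_P_nonneg \<open>t > 0\<close> by (intro divide_right_mono mult_left_mono) auto
  then show ?thesis
    using \<open>t > 0\<close> kin_P_nonneg[of t x v y w]
    by (simp add: kin_dP_def kin_P_weighted_def abs_mult mult_ac)
qed

section \<open>Bounded sources of finite support\<close>

(* Majorant in t: the space integrals are O(1), their v-derivatives O(t^(-1/2)), for t <= 1,
   and both are O(t^(-2d)) for t >= 1. *)
definition time_weight :: "real \<Rightarrow> real" where
  "time_weight t = indicator {0..1} t * t powr (-1/2) + indicator {1..} t * t powr (-2)"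

lemma time_weight_nonneg: "time_weight t \<ge> 0"
  by (simp add: time_weight_def)

lemma borel_measurable_time_weight [measurable]: "time_weight \<in> borel_measurable borel"
  unfolding time_weight_def by measurable

lemma integrable_time_weight: "integrable lborel time_weight"
proof -
  have "integrable lborel (\<lambda>t::real. indicator {0..1} t * t powr (-1/2))"
  proof (rule integrable_lborel_of_has_integral)
    have "((\<lambda>t. t powr (-1/2::real)) has_integral (1 powr (-1/2 + 1) / (-1/2 + 1))) {0..1}"
      by (rule has_integral_powr_from_0) auto
    moreover have "(\<lambda>t. indicator {0..1} t * t powr (-1/2)) = (\<lambda>t. if t \<in> {0..1} then t powr (-1/2::real) else 0)"
      by (auto simp: fun_eq_iff)
    ultimately show "((\<lambda>t. indicator {0..1} t * t powr (-1/2)) has_integral (1 powr (-1/2 + 1) / (-1/2 + 1 :: real))) UNIV"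
      by (simp only: has_integral_restrict_UNIV)
  qed auto
  moreover have "integrable lborel (\<lambda>t::real. indicator {1..} t * t powr (-2))"
  proof (rule integrable_lborel_of_has_integral)
    have "((\<lambda>t. t powr (-2::real)) has_integral (- (1 powr (-2 + 1)) / (-2 + 1))) {1..}"
      by (rule has_integral_powr_to_inf) auto
    moreover have "(\<lambda>t. indicator {1..} t * t powr (-2)) = (\<lambda>t. if t \<in> {1..} then t powr (-2::real) else 0)"
      by (auto simp: fun_eq_iff)
    ultimately show "((\<lambda>t. indicator {1..} t * t powr (-2)) has_integral (- (1 powr (-2 + 1)) / (-2 + 1 :: real))) UNIV"
      by (simp only: has_integral_restrict_UNIV)
  qed auto
  ultimately show ?thesis
    unfolding time_weight_def by (rule Bochner_Integration.integrable_add)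
qed

lemma min_one_le_time_weight:
  fixes t :: real
  assumes "t > 0" "n \<ge> 1"
  shows "min 1 (1 / t ^ (2 * n)) / sqrt t \<le> time_weight t"
    and "min 1 (1 / t ^ (2 * n)) \<le> time_weight t"
proof -
  have "min 1 (1 / t ^ (2 * n)) / sqrt t \<le> time_weight t \<and> min 1 (1 / t ^ (2 * n)) \<le> time_weight t"
  proof (cases "t \<le> 1")
    case True
    have "1 \<le> t powr (-1/2)"
      using assms True by (simp add: powr_minus_divide powr_le1)
    moreover have "1 / sqrt t = t powr (-1/2)"
      using assms by (simp add: powr_minus_divide powr_half_sqrt)
    moreover have "min 1 (1 / t ^ (2 * n)) = 1"
      using assms True by (simp add: power_le_one)
    moreover have "t powr (-1/2) \<le> time_weight t"
      using assms True by (simp add: time_weight_def)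
    ultimately show ?thesis
      by simp
  next
    case False
    have "1 / t ^ (2 * n) \<le> 1 / t ^ 2"
      using assms False by (intro divide_left_mono power_increasing) auto
    also have "\<dots> = t powr (-2)"
      using assms by (simp add: powr_minus_divide)
    finally have "min 1 (1 / t ^ (2 * n)) \<le> t powr (-2)"
      by linarith
    moreover have "min 1 (1 / t ^ (2 * n)) / sqrt t \<le> min 1 (1 / t ^ (2 * n))"
      using False by (simp add: divide_le_eq mult_le_cancel_left1)
    ultimately show ?thesis
      using False by (auto simp: time_weight_def)
  qed
  then show "min 1 (1 / t ^ (2 * n)) / sqrt t \<le> time_weight t" "min 1 (1 / t ^ (2 * n)) \<le> time_weight t"
    by auto
qed

definition kin_source_const :: "((real^'n::finite) \<times> (real^'n)) set \<Rightarrow> real" where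
  "kin_source_const S = kin_weight_bound TYPE('n) + 4 * kin_const CARD('n) * measure lborel S"

(* The source theta^eps(y) chi(w) of U^eps, abstracted to the properties the estimates use. *)
locale kin_source =
  fixes g :: "(real^'n::finite) \<times> (real^'n) \<Rightarrow> real"
    and S :: "((real^'n) \<times> (real^'n)) set" and M :: real
  assumes borel_measurable_source [measurable]: "g \<in> borel_measurable borel"
    and abs_source_le: "\<And>p. \<bar>g p\<bar> \<le> M"
    and source_outside: "\<And>p. p \<notin> S \<Longrightarrow> g p = 0"
    and sets_support [measurable]: "S \<in> sets borel"
    and emeasure_support: "emeasure lborel S < \<infinity>"
begin

lemma source_bound_nonneg: "M \<ge> 0"
  using abs_source_le[of undefined] by linarith

lemma abs_source_le_indicator: "\<bar>g p\<bar> \<le> M * indicator S p"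
  using abs_source_le[of p] source_outside[of p] by (auto split: split_indicator)

lemma borel_measurable_source_pair [measurable]: "g \<in> borel_measurable (borel \<Otimes>\<^sub>M borel)"
  using borel_measurable_source by (simp add: borel_prod)

lemma kin_source_const_nonneg: "kin_source_const S \<ge> 0"
  unfolding kin_source_const_def
  using kin_weight_bound_nonneg[where 'n='n] kin_const_pos[of "CARD('n)"] by simp

lemma nn_integral_weighted_source_le_small_time:
  fixes x v :: "real^'n"
  assumes "t > 0"
  shows "(\<integral>\<^sup>+p. ennreal (kin_P_weighted t x v (fst p) (snd p) * \<bar>g p\<bar>) \<partial>lborel)
    \<le> ennreal (M * kin_weight_bound TYPE('n))"
proof -
  let ?W = "\<lambda>p. kin_P_weighted t x v (fst p) (snd p)"
  have "?W p * \<bar>g p\<bar> \<le> M * ?W p" for p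
    using mult_left_mono[OF abs_source_le kin_P_weighted_nonneg] by (simp add: mult.commute)
  then have "(\<integral>\<^sup>+p. ennreal (?W p * \<bar>g p\<bar>) \<partial>lborel) \<le> (\<integral>\<^sup>+p. ennreal M * ennreal (?W p) \<partial>lborel)"
    using source_bound_nonneg by (intro nn_integral_mono) (simp add: ennreal_mult'[symmetric] ennreal_leI)
  also have "\<dots> = ennreal M * (\<integral>\<^sup>+p. ennreal (?W p) \<partial>lborel)"
    by (rule nn_integral_cmult) measurable
  also have "\<dots> \<le> ennreal M * ennreal (kin_weight_bound TYPE('n))"
    by (intro mult_left_mono nn_integral_kin_P_weighted_le \<open>t > 0\<close>) simp
  finally show ?thesis
    using source_bound_nonneg by (simp add: ennreal_mult')
qed

lemma nn_integral_weighted_source_le_large_time: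
  fixes x v :: "real^'n"
  assumes "t > 0"
  shows "(\<integral>\<^sup>+p. ennreal (kin_P_weighted t x v (fst p) (snd p) * \<bar>g p\<bar>) \<partial>lborel)
    \<le> ennreal (4 * kin_const CARD('n) / t ^ (2 * CARD('n)) * M * measure lborel S)"
proof -
  let ?W = "\<lambda>p. kin_P_weighted t x v (fst p) (snd p)"
  let ?c = "4 * kin_const CARD('n) / t ^ (2 * CARD('n))"
  have c: "?c \<ge> 0"
    using kin_const_pos[of "CARD('n)"] \<open>t > 0\<close> by simp
  have pointwise: "?W p * \<bar>g p\<bar> \<le> ?c * (M * indicator S p)" for p
    using c by (intro mult_mono kin_P_weighted_le[OF \<open>t > 0\<close>] abs_source_le_indicator) auto
  have "ennreal (?W p * \<bar>g p\<bar>) \<le> ennreal (?c * M) * indicator S p" for p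
    using pointwise[of p] by (cases "p \<in> S") (simp_all add: ennreal_leI ennreal_eq_0_iff)
  then have "(\<integral>\<^sup>+p. ennreal (?W p * \<bar>g p\<bar>) \<partial>lborel) \<le> (\<integral>\<^sup>+p. ennreal (?c * M) * indicator S p \<partial>lborel)"
    by (intro nn_integral_mono)
  also have "\<dots> = ennreal (?c * M) * ennreal (measure lborel S)"
    using emeasure_support by (simp add: nn_integral_cmult_indicator emeasure_eq_ennreal_measure)
  also have "\<dots> = ennreal (?c * M * measure lborel S)"
    by (rule ennreal_mult'[symmetric, OF mult_nonneg_nonneg[OF c source_bound_nonneg]])
  finally show ?thesis .
qed

lemma nn_integral_weighted_source_le:
  fixes x v :: "real^'n"
  assumes "t > 0"
  shows "(\<integral>\<^sup>+p. ennreal (kin_P_weighted t x v (fst p) (snd p) * \<bar>g p\<bar>) \<partial>lborel)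
    \<le> ennreal (M * kin_source_const S * min 1 (1 / t ^ (2 * CARD('n))))"
proof (cases "t \<le> 1")
  case True
  then have "min 1 (1 / t ^ (2 * CARD('n))) = 1"
    using \<open>t > 0\<close> by (simp add: power_le_one)
  moreover have "M * kin_weight_bound TYPE('n) \<le> M * kin_source_const S"
    using source_bound_nonneg kin_const_pos[of "CARD('n)"]
    by (intro mult_left_mono) (auto simp: kin_source_const_def)
  ultimately show ?thesis
    using nn_integral_weighted_source_le_small_time[OF \<open>t > 0\<close>, of x v]
    by (auto simp: ennreal_leI intro: order_trans)
next
  case False
  then have "1 < t ^ (2 * CARD('n))"
    by (intro one_less_power) auto
  then have min_eq: "min 1 (1 / t ^ (2 * CARD('n))) = 1 / t ^ (2 * CARD('n))"
    by (simp add: min_def)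
  have "4 * kin_const CARD('n) / t ^ (2 * CARD('n)) * M * measure lborel S
      = M * (4 * kin_const CARD('n) * measure lborel S) * (1 / t ^ (2 * CARD('n)))"
    by simp
  also have "\<dots> \<le> M * kin_source_const S * min 1 (1 / t ^ (2 * CARD('n)))"
    unfolding min_eq using source_bound_nonneg kin_weight_bound_nonneg[where 'n='n] \<open>t > 0\<close>
    by (intro mult_right_mono mult_left_mono) (auto simp: kin_source_const_def)
  finally show ?thesis
    using nn_integral_weighted_source_le_large_time[OF \<open>t > 0\<close>, of x v]
    by (auto simp: ennreal_leI intro: order_trans)
qed

lemma nn_integral_kin_P_source_le:
  fixes x v :: "real^'n"
  assumes "t > 0"
  shows "(\<integral>\<^sup>+p. ennreal \<bar>kin_P t x v (fst p) (snd p) * g p\<bar> \<partial>lborel)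
    \<le> ennreal (M * kin_source_const S * time_weight t)"
proof -
  have "(\<integral>\<^sup>+p. ennreal \<bar>kin_P t x v (fst p) (snd p) * g p\<bar> \<partial>lborel)
      \<le> (\<integral>\<^sup>+p. ennreal (kin_P_weighted t x v (fst p) (snd p) * \<bar>g p\<bar>) \<partial>lborel)"
    by (intro nn_integral_mono ennreal_leI)
      (simp add: abs_mult kin_P_nonneg mult_right_mono kin_P_le_weighted)
  also have "\<dots> \<le> ennreal (M * kin_source_const S * min 1 (1 / t ^ (2 * CARD('n))))"
    by (rule nn_integral_weighted_source_le[OF \<open>t > 0\<close>])
  also have "\<dots> \<le> ennreal (M * kin_source_const S * time_weight t)"
    using min_one_le_time_weight(2)[OF \<open>t > 0\<close>, of "CARD('n)"] source_bound_nonneg kin_source_const_nonneg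
    by (intro ennreal_leI mult_left_mono) auto
  finally show ?thesis .
qed

lemma nn_integral_kin_dP_source_le:
  fixes x v :: "real^'n"
  assumes "t > 0"
  shows "(\<integral>\<^sup>+p. ennreal \<bar>kin_dP t x v (fst p) (snd p) h * g p\<bar> \<partial>lborel)
    \<le> ennreal (3 * M * kin_source_const S * time_weight t * norm h)"
proof -
  let ?a = "3 / sqrt t * norm h"
  let ?m = "min 1 (1 / t ^ (2 * CARD('n)))"
  have a: "?a \<ge> 0"
    using \<open>t > 0\<close> by simp
  have "\<bar>kin_dP t x v (fst p) (snd p) h * g p\<bar> \<le> ?a * (kin_P_weighted t x v (fst p) (snd p) * \<bar>g p\<bar>)" for p
    using mult_right_mono[OF abs_kin_dP_le[OF \<open>t > 0\<close>] abs_ge_zero[of "g p"]]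
    by (simp add: abs_mult mult_ac)
  then have "(\<integral>\<^sup>+p. ennreal \<bar>kin_dP t x v (fst p) (snd p) h * g p\<bar> \<partial>lborel)
      \<le> (\<integral>\<^sup>+p. ennreal ?a * ennreal (kin_P_weighted t x v (fst p) (snd p) * \<bar>g p\<bar>) \<partial>lborel)"
    using a by (intro nn_integral_mono) (simp add: ennreal_leI flip: ennreal_mult')
  also have "\<dots> = ennreal ?a * (\<integral>\<^sup>+p. ennreal (kin_P_weighted t x v (fst p) (snd p) * \<bar>g p\<bar>) \<partial>lborel)"
    by (rule nn_integral_cmult) measurable
  also have "\<dots> \<le> ennreal ?a * ennreal (M * kin_source_const S * ?m)"
    by (intro mult_left_mono nn_integral_weighted_source_le \<open>t > 0\<close>) simp
  also have "\<dots> = ennreal (3 * M * kin_source_const S * norm h * (?m / sqrt t))"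
    using a by (simp add: mult_ac flip: ennreal_mult')
  also have "\<dots> \<le> ennreal (3 * M * kin_source_const S * norm h * time_weight t)"
    using min_one_le_time_weight(1)[OF \<open>t > 0\<close>, of "CARD('n)"] source_bound_nonneg kin_source_const_nonneg
    by (intro ennreal_leI mult_left_mono) auto
  finally show ?thesis
    by (simp add: mult_ac)
qed

lemma integrable_kin_P_source:
  fixes x v :: "real^'n"
  assumes "t > 0"
  shows "integrable lborel (\<lambda>p. kin_P t x v (fst p) (snd p) * g p)"
  using nn_integral_kin_P_source_le[OF \<open>t > 0\<close>, of x v]
  by (intro integrableI_bounded) (auto simp: less_top[symmetric] top_unique)

lemma integrable_kin_dP_source:
  fixes x v :: "real^'n"
  assumes "t > 0"
  shows "integrable lborel (\<lambda>p. kin_dP t x v (fst p) (snd p) h * g p)"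
  using nn_integral_kin_dP_source_le[OF \<open>t > 0\<close>, of x v h]
  by (intro integrableI_bounded) (auto simp: less_top[symmetric] top_unique)

definition kin_Pg :: "real \<Rightarrow> real^'n \<Rightarrow> real^'n \<Rightarrow> real" where
  "kin_Pg t x v = (\<integral>p. kin_P t x v (fst p) (snd p) * g p \<partial>lborel)"

definition kin_dPg :: "real \<Rightarrow> real^'n \<Rightarrow> real^'n \<Rightarrow> real^'n \<Rightarrow> real" where
  "kin_dPg t x v h = (\<integral>p. kin_dP t x v (fst p) (snd p) h * g p \<partial>lborel)"

lemma borel_measurable_kin_P_source_time [measurable]:
  "(\<lambda>(t, p). kin_P t x v (fst p) (snd p) * g p) \<in> borel_measurable (lborel \<Otimes>\<^sub>M lborel)"
proof -
  have "(\<lambda>q. kin_P (fst q) x v (fst (snd q)) (snd (snd q)) * g (snd q)) \<in> borel_measurable (lborel \<Otimes>\<^sub>M lborel)"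
    by (rule borel_measurable_lborel_pair) (unfold kin_P_def, measurable)
  then show ?thesis
    by (simp add: case_prod_beta')
qed

lemma borel_measurable_kin_dP_source_time [measurable]:
  "(\<lambda>(t, p). kin_dP t x v (fst p) (snd p) h * g p) \<in> borel_measurable (lborel \<Otimes>\<^sub>M lborel)"
proof -
  have "(\<lambda>q. kin_dP (fst q) x v (fst (snd q)) (snd (snd q)) h * g (snd q)) \<in> borel_measurable (lborel \<Otimes>\<^sub>M lborel)"
    by (rule borel_measurable_lborel_pair) (unfold kin_dP_def kin_P_def kin_A_def kin_B_def, measurable)
  then show ?thesis
    by (simp add: case_prod_beta')
qed

lemma borel_measurable_kin_Pg [measurable]: "(\<lambda>t. kin_Pg t x v) \<in> borel_measurable lborel"
  unfolding kin_Pg_def by (intro lborel.borel_measurable_lebesgue_integral borel_measurable_kin_P_source_time)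

lemma borel_measurable_kin_dPg [measurable]: "(\<lambda>t. kin_dPg t x v h) \<in> borel_measurable lborel"
  unfolding kin_dPg_def by (intro lborel.borel_measurable_lebesgue_integral borel_measurable_kin_dP_source_time)

lemma abs_kin_Pg_le: "\<bar>indicator {0<..} t * kin_Pg t x v\<bar> \<le> M * kin_source_const S * time_weight t"
proof (cases "t > 0")
  case True
  then show ?thesis
    unfolding kin_Pg_def
    using abs_integral_le_of_nn_integral_le[OF integrable_kin_P_source nn_integral_kin_P_source_le]
      source_bound_nonneg kin_source_const_nonneg time_weight_nonneg
    by simp
qed (use source_bound_nonneg kin_source_const_nonneg time_weight_nonneg in simp)

lemma abs_kin_dPg_le: "\<bar>indicator {0<..} t * kin_dPg t x v h\<bar> \<le> 3 * M * kin_source_const S * time_weight t * norm h"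
proof (cases "t > 0")
  case True
  then show ?thesis
    unfolding kin_dPg_def
    using abs_integral_le_of_nn_integral_le[OF integrable_kin_dP_source nn_integral_kin_dP_source_le]
      source_bound_nonneg kin_source_const_nonneg time_weight_nonneg
    by simp
qed (use source_bound_nonneg kin_source_const_nonneg time_weight_nonneg in simp)

lemma integrable_kin_Pg: "integrable lborel (\<lambda>t. indicator {0<..} t * kin_Pg t x v)"
  by (rule integrable_dominated[where H="\<lambda>t. M * kin_source_const S * time_weight t"])
    (measurable, simp_all add: integrable_time_weight abs_kin_Pg_le)

lemma integrable_kin_dPg: "integrable lborel (\<lambda>t. indicator {0<..} t * kin_dPg t x v h)"
  by (rule integrable_dominated[where H="\<lambda>t. 3 * M * kin_source_const S * time_weight t * norm h"])
    (measurable, simp_all add: integrable_time_weight abs_kin_dPg_le)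

lemma has_derivative_kin_Pg:
  fixes x v :: "real^'n"
  assumes "t > 0"
  shows "((\<lambda>v. kin_Pg t x v) has_derivative kin_dPg t x v) (at v)"
proof -
  let ?H = "\<lambda>p. 3 / sqrt t * (4 * kin_const CARD('n) / t ^ (2 * CARD('n))) * (M * indicator S p)"
  have "\<bar>kin_dP t x u (fst p) (snd p) h * g p\<bar> \<le> ?H p * norm h" for u p h
  proof -
    have "3 / sqrt t * kin_P_weighted t x u (fst p) (snd p) * norm h
        \<le> 3 / sqrt t * (4 * kin_const CARD('n) / t ^ (2 * CARD('n))) * norm h"
      using \<open>t > 0\<close> by (intro mult_right_mono mult_left_mono kin_P_weighted_le) auto
    with abs_kin_dP_le[OF \<open>t > 0\<close>]
    have "\<bar>kin_dP t x u (fst p) (snd p) h\<bar> \<le> 3 / sqrt t * (4 * kin_const CARD('n) / t ^ (2 * CARD('n))) * norm h"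
      by (rule order_trans)
    then have "\<bar>kin_dP t x u (fst p) (snd p) h\<bar> * \<bar>g p\<bar>
        \<le> 3 / sqrt t * (4 * kin_const CARD('n) / t ^ (2 * CARD('n))) * norm h * (M * indicator S p)"
      using \<open>t > 0\<close> kin_const_pos[of "CARD('n)"]
      by (intro mult_mono abs_source_le_indicator) auto
    then show ?thesis
      by (simp add: abs_mult mult_ac)
  qed
  moreover have "integrable lborel ?H"
    using emeasure_support by (intro integrable_mult_right integrable_real_indicator) auto
  ultimately show ?thesis
    unfolding kin_Pg_def kin_dPg_def
    by (intro has_derivative_integral_dominated[where \<delta>=1 and H="?H"] has_derivative_mult_left
        has_derivative_kin_P integrable_kin_P_source \<open>t > 0\<close>) (auto simp: mult_ac)
qed

lemma has_derivative_integral_kin_Pg: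
  "((\<lambda>v. \<integral>t. indicator {0<..} t * kin_Pg t x v \<partial>lborel) has_derivative
     (\<lambda>h. \<integral>t. indicator {0<..} t * kin_dPg t x v h \<partial>lborel)) (at v)"
proof (rule has_derivative_integral_dominated[where \<delta>=1 and H="\<lambda>t. 3 * M * kin_source_const S * time_weight t"])
  show "((\<lambda>u. indicator {0<..} t * kin_Pg t x u) has_derivative (\<lambda>h. indicator {0<..} t * kin_dPg t x u h)) (at u)"
    for u t
    by (cases "t > 0") (auto intro: has_derivative_mult_right has_derivative_kin_Pg)
  show "integrable lborel (\<lambda>t. 3 * M * kin_source_const S * time_weight t)"
    using integrable_time_weight by simp
  show "\<bar>indicator {0<..} t * kin_dPg t x u h\<bar> \<le> 3 * M * kin_source_const S * time_weight t * norm h"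
    for u t h
    by (rule abs_kin_dPg_le)
qed (simp_all add: integrable_kin_Pg)

lemma abs_integral_kin_Pg_le:
  "\<bar>\<integral>t. indicator {0<..} t * kin_Pg t x v \<partial>lborel\<bar> \<le> M * kin_source_const S * (\<integral>t. time_weight t \<partial>lborel)"
proof -
  have "\<bar>\<integral>t. indicator {0<..} t * kin_Pg t x v \<partial>lborel\<bar> \<le> (\<integral>t. \<bar>indicator {0<..} t * kin_Pg t x v\<bar> \<partial>lborel)"
    by (rule integral_abs_bound)
  also have "\<dots> \<le> (\<integral>t. M * kin_source_const S * time_weight t \<partial>lborel)"
    using integrable_kin_Pg integrable_time_weight abs_kin_Pg_le
    by (intro Bochner_Integration.integral_mono) auto
  finally show ?thesis
    by simp
qed

lemma abs_integral_kin_dPg_le: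
  "\<bar>\<integral>t. indicator {0<..} t * kin_dPg t x v h \<partial>lborel\<bar>
    \<le> 3 * M * kin_source_const S * (\<integral>t. time_weight t \<partial>lborel) * norm h"
proof -
  have "\<bar>\<integral>t. indicator {0<..} t * kin_dPg t x v h \<partial>lborel\<bar>
      \<le> (\<integral>t. \<bar>indicator {0<..} t * kin_dPg t x v h\<bar> \<partial>lborel)"
    by (rule integral_abs_bound)
  also have "\<dots> \<le> (\<integral>t. 3 * M * kin_source_const S * time_weight t * norm h \<partial>lborel)"
    using integrable_kin_dPg integrable_time_weight abs_kin_dPg_le
    by (intro Bochner_Integration.integral_mono) auto
  finally show ?thesis
    by simp
qed

lemma integrable_kin_P_source_time:
  "integrable (lborel \<Otimes>\<^sub>M lborel) (\<lambda>(t, p). indicator {0<..} t * kin_P t x v (fst p) (snd p) * g p)"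
proof (rule integrableI_bounded)
  let ?F = "\<lambda>(t, p). indicator {0<..} t * kin_P t x v (fst p) (snd p) * g p"
  have "(\<lambda>q. indicator {0<..} (fst q) * (case q of (t, p) \<Rightarrow> kin_P t x v (fst p) (snd p) * g p))
      \<in> borel_measurable (lborel \<Otimes>\<^sub>M lborel)"
    by measurable
  then show F: "?F \<in> borel_measurable (lborel \<Otimes>\<^sub>M lborel)"
    by (simp add: case_prod_beta' mult.assoc)
  have "(\<lambda>q. ennreal (norm (?F q))) \<in> borel_measurable (lborel \<Otimes>\<^sub>M lborel)"
    by (rule measurable_compose[OF F]) measurable
  then have "(\<integral>\<^sup>+q. ennreal (norm (?F q)) \<partial>(lborel \<Otimes>\<^sub>M lborel))
      = (\<integral>\<^sup>+t. \<integral>\<^sup>+p. ennreal (norm (?F (t, p))) \<partial>lborel \<partial>lborel)"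
    by (rule lborel.nn_integral_fst[symmetric])
  also have "\<dots> \<le> (\<integral>\<^sup>+t. ennreal (M * kin_source_const S * time_weight t) \<partial>lborel)"
  proof (rule nn_integral_mono)
    fix t :: real
    show "(\<integral>\<^sup>+p. ennreal (norm (?F (t, p))) \<partial>lborel) \<le> ennreal (M * kin_source_const S * time_weight t)"
      using nn_integral_kin_P_source_le[of t x v] by (cases "t > 0") (simp_all add: mult.assoc)
  qed
  also have "\<dots> < \<infinity>"
    using integrable_time_weight source_bound_nonneg kin_source_const_nonneg time_weight_nonneg
    by (simp add: integrable_iff_bounded nn_integral_cmult ennreal_mult' ennreal_mult_less_top)
  finally show "(\<integral>\<^sup>+q. ennreal (norm (?F q)) \<partial>(lborel \<Otimes>\<^sub>M lborel)) < \<infinity>" .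
qed

lemma integral_time_kin_P_source:
  "(\<integral>t. indicator {0<..} t * kin_P t x v (fst p) (snd p) * g p \<partial>lborel) = kin_G x v (fst p) (snd p) * g p"
  by (simp add: integral_kin_P_eq_kin_G)

lemma integrable_kin_G_source: "integrable lborel (\<lambda>p. kin_G x v (fst p) (snd p) * g p)"
  using lborel_pair.integrable_snd[OF integrable_kin_P_source_time]
  unfolding integral_time_kin_P_source .

lemma integral_kin_G_source:
  "(\<integral>p. kin_G x v (fst p) (snd p) * g p \<partial>lborel) = (\<integral>t. indicator {0<..} t * kin_Pg t x v \<partial>lborel)"
proof -
  have "(\<integral>p. \<integral>t. indicator {0<..} t * kin_P t x v (fst p) (snd p) * g p \<partial>lborel \<partial>lborel)
      = (\<integral>t. \<integral>p. indicator {0<..} t * kin_P t x v (fst p) (snd p) * g p \<partial>lborel \<partial>lborel)"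
    by (rule lborel_pair.Fubini_integral[OF integrable_kin_P_source_time])
  then show ?thesis
    unfolding integral_time_kin_P_source by (simp add: kin_Pg_def mult.assoc)
qed

lemma kin_G_source_estimates:
  defines "C \<equiv> 3 * M * kin_source_const S * (\<integral>t. time_weight t \<partial>lborel)"
  shows "integrable lborel (\<lambda>p. kin_G x v (fst p) (snd p) * g p) \<and>
    \<bar>\<integral>p. kin_G x v (fst p) (snd p) * g p \<partial>lborel\<bar> \<le> C \<and>
    (\<exists>D. ((\<lambda>v. \<integral>p. kin_G x v (fst p) (snd p) * g p \<partial>lborel) has_derivative D) (at v) \<and>
      (\<forall>h. \<bar>D h\<bar> \<le> C * norm h))"
proof (intro conjI exI[of _ "\<lambda>h. \<integral>t. indicator {0<..} t * kin_dPg t x v h \<partial>lborel"] allI)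
  have "M * kin_source_const S * (\<integral>t. time_weight t \<partial>lborel) \<ge> 0"
    using source_bound_nonneg kin_source_const_nonneg by (simp add: time_weight_nonneg)
  then show "\<bar>\<integral>p. kin_G x v (fst p) (snd p) * g p \<partial>lborel\<bar> \<le> C"
    unfolding C_def integral_kin_G_source using abs_integral_kin_Pg_le[of x v] by linarith
  show "((\<lambda>v. \<integral>p. kin_G x v (fst p) (snd p) * g p \<partial>lborel) has_derivative
      (\<lambda>h. \<integral>t. indicator {0<..} t * kin_dPg t x v h \<partial>lborel)) (at v)"
    unfolding integral_kin_G_source by (rule has_derivative_integral_kin_Pg)
  show "\<bar>\<integral>t. indicator {0<..} t * kin_dPg t x v h \<partial>lborel\<bar> \<le> C * norm h" for h
    unfolding C_def by (rule abs_integral_kin_dPg_le)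
qed (rule integrable_kin_G_source)

end

lemma kin_source_mollified:
  fixes theta chi :: "real^'n::finite \<Rightarrow> real"
  assumes "continuous_on UNIV theta" "continuous_on UNIV chi"
    and theta_le: "\<And>y. \<bar>theta y\<bar> \<le> \<Theta>" and theta_supp: "\<And>y. norm y > 1 \<Longrightarrow> theta y = 0"
    and chi_le: "\<And>\<xi>. \<bar>chi \<xi>\<bar> \<le> 1" and chi_supp: "\<And>\<xi>. norm \<xi> \<ge> R \<Longrightarrow> chi \<xi> = 0"
    and "0 < \<epsilon>" "\<epsilon> \<le> 1"
  shows "kin_source (\<lambda>p. mollif theta \<epsilon> (fst p) * chi (snd p)) (cball 0 1 \<times> cball 0 R)
    (\<epsilon> powr (- real CARD('n)) * \<Theta>)"
proof
  note [measurable] =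
    borel_measurable_continuous_onI[OF assms(1)] borel_measurable_continuous_onI[OF assms(2)]
  have "(\<lambda>p. mollif theta \<epsilon> (fst p) * chi (snd p)) \<in> borel_measurable (borel \<Otimes>\<^sub>M borel)"
    unfolding mollif_def by measurable
  then show "(\<lambda>p. mollif theta \<epsilon> (fst p) * chi (snd p)) \<in> borel_measurable borel"
    by (simp add: borel_prod)
  show "\<bar>mollif theta \<epsilon> (fst p) * chi (snd p)\<bar> \<le> \<epsilon> powr (- real CARD('n)) * \<Theta>" for p
  proof -
    have "\<bar>theta ((1 / \<epsilon>) *\<^sub>R fst p)\<bar> * \<bar>chi (snd p)\<bar> \<le> \<Theta> * 1"
      using theta_le[of 0] by (intro mult_mono theta_le chi_le) auto
    then have "\<epsilon> powr (- real CARD('n)) * (\<bar>theta ((1 / \<epsilon>) *\<^sub>R fst p)\<bar> * \<bar>chi (snd p)\<bar>)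
        \<le> \<epsilon> powr (- real CARD('n)) * \<Theta>"
      by (intro mult_left_mono) auto
    then show ?thesis
      by (simp add: mollif_def abs_mult mult.assoc)
  qed
  show "mollif theta \<epsilon> (fst p) * chi (snd p) = 0" if "p \<notin> cball 0 1 \<times> cball 0 R" for p
  proof (cases "norm (fst p) > 1")
    case True
    have "norm ((1 / \<epsilon>) *\<^sub>R fst p) = norm (fst p) / \<epsilon>"
      using \<open>0 < \<epsilon>\<close> by simp
    also have "\<dots> \<ge> norm (fst p)"
      using \<open>0 < \<epsilon>\<close> \<open>\<epsilon> \<le> 1\<close> by (simp add: le_divide_eq mult_left_le)
    finally have "norm ((1 / \<epsilon>) *\<^sub>R fst p) > 1"
      using True by linarith
    then show ?thesis
      by (simp add: mollif_def theta_supp)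
  next
    case False
    then have "norm (snd p) > R"
      using that by (cases p) auto
    then show ?thesis
      by (simp add: chi_supp)
  qed
  show "emeasure lborel (cball 0 1 \<times> cball 0 R) < \<infinity>"
    by (rule emeasure_bounded_finite) (simp add: bounded_Times)
qed (simp add: closed_Times)

theorem lemma5p2:
  fixes theta chi :: "real^'n::finite \<Rightarrow> real" and K :: real
    and KK :: "((real^'n) \<times> (real^'n)) set"
  assumes theta_smooth: "smooth_fun theta"
    and theta_nonneg: "\<And>x. theta x \<ge> 0"
    and theta_int: "integrable lborel theta" "(\<integral> x. theta x \<partial>lborel) = 1"
    and theta_zero: "theta 0 = 0"
    and theta_even: "\<And>x. theta x = theta (- x)"
    and theta_supp: "\<And>x. norm x > 1 \<Longrightarrow> theta x = 0"
    and K_pos: "K > 0"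
    and chi_smooth: "smooth_fun chi"
    and chi_range: "\<And>\<xi>. 0 \<le> chi \<xi> \<and> chi \<xi> \<le> 1"
    and chi_one: "\<And>\<xi>. norm \<xi> \<le> 2 * K \<Longrightarrow> chi \<xi> = 1"
    and chi_zero: "\<And>\<xi>. norm \<xi> \<ge> 4 * K \<Longrightarrow> chi \<xi> = 0"
    and KK_compact: "compact KK"
  shows "\<exists>C::real. \<forall>\<epsilon> x v. 0 < \<epsilon> \<and> \<epsilon> \<le> 1 \<and> (x, v) \<in> KK \<longrightarrow>
           integrable lborel (U_integrand theta chi \<epsilon> x v) \<and>
           \<bar>U_eps theta chi \<epsilon> x v\<bar> \<le> C * \<epsilon> powr (- real CARD('n)) \<and>
           (\<exists>D. ((\<lambda>w. U_eps theta chi \<epsilon> x w) has_derivative D) (at v) \<and>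
                (\<forall>h. \<bar>D h\<bar> \<le> C * \<epsilon> powr (- real CARD('n)) * norm h))"
proof -
  have theta_cont: "continuous_on UNIV theta" and chi_cont: "continuous_on UNIV chi"
    using theta_smooth chi_smooth unfolding smooth_fun_def by (metis iter_partial.simps(1))+
  obtain \<Theta> where theta_le: "\<And>y. \<bar>theta y\<bar> \<le> \<Theta>"
    using bounded_vanishing_outside_cball[OF theta_cont theta_supp] by blast
  define S :: "((real^'n) \<times> (real^'n)) set" where "S = cball 0 1 \<times> cball 0 (4 * K)"
  define C where "C = 3 * \<Theta> * kin_source_const S * (\<integral>t. time_weight t \<partial>lborel)"
  have source: "kin_source (\<lambda>p. mollif theta \<epsilon> (fst p) * chi (snd p)) S (\<epsilon> powr (- real CARD('n)) * \<Theta>)"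
    if "0 < \<epsilon>" "\<epsilon> \<le> 1" for \<epsilon>
    unfolding S_def using chi_range chi_zero that
    by (intro kin_source_mollified theta_cont chi_cont theta_le theta_supp) auto
  have U_integrand: "U_integrand theta chi \<epsilon> x v
      = (\<lambda>p. kin_G x v (fst p) (snd p) * (mollif theta \<epsilon> (fst p) * chi (snd p)))" for \<epsilon> x v
    by (auto simp: U_integrand_def fun_eq_iff mult.assoc)
  have U_eps: "U_eps theta chi \<epsilon> x
      = (\<lambda>v. \<integral>p. kin_G x v (fst p) (snd p) * (mollif theta \<epsilon> (fst p) * chi (snd p)) \<partial>lborel)" for \<epsilon> x
    by (simp add: U_eps_def U_integrand fun_eq_iff)
  have C: "3 * (\<epsilon> powr (- real CARD('n)) * \<Theta>) * kin_source_const S * (\<integral>t. time_weight t \<partial>lborel)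
      = C * \<epsilon> powr (- real CARD('n))" for \<epsilon>
    by (simp add: C_def)
  have "integrable lborel (U_integrand theta chi \<epsilon> x v) \<and>
      \<bar>U_eps theta chi \<epsilon> x v\<bar> \<le> C * \<epsilon> powr (- real CARD('n)) \<and>
      (\<exists>D. (U_eps theta chi \<epsilon> x has_derivative D) (at v) \<and>
        (\<forall>h. \<bar>D h\<bar> \<le> C * \<epsilon> powr (- real CARD('n)) * norm h))"
    if "0 < \<epsilon>" "\<epsilon> \<le> 1" for \<epsilon> x v
    using kin_source.kin_G_source_estimates[OF source[OF that], of x v] unfolding C U_eps U_integrand .
  then show ?thesis
    by blast
qed

end
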